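(* Fix $K$ with $K\log\log p\le\log p$. Suppose $\mu\in\mathbb{R}^{p\times K}$ has the prior described in the context, with hyperparameters $\kappa>0$ and $\lambda_0\gg\lambda_1>0$, and let $\delta=(1+\kappa)\log p/\lambda_0$. Then there exist constants $\beta,c>0$ such that, for all sufficiently large $n$, $$\Pi\left(|\mathrm{supp}_\delta(\mu)|\ge\beta\left(s+\frac{n\log K}{\log p}\right)\right)\le\exp\{-c(s\log p+n\log K)\}.$$
   Context: Prior on $\mu=[\mu_1,\dots,\mu_K]\in\mathbb R^{p\times K}$ (given $K$): $\theta\sim\mathrm{Beta}(1,\beta_\theta)$ with $\beta_\theta=p^{1+\kappa}\log p$; given $\theta$, $\xi_1,\dots,\xi_p$ i.i.d. $\mathrm{Bernoulli}(\theta)$; given $\xi$, the entries $\mu_{kj}$ are independent with density $(1-\xi_j)\psi(\cdot\mid\lambda_0)+\xi_j\psi(\cdot\mid\lambda_1)$, $\psi(x\mid\lambda)=(\lambda/2)e^{-\lambda|x|}$. Soft support: for $\delta>0$, $\mathrm{supp}_\delta(\mu)=\{j\in[p]:\|\mu_{j\cdot}\|_1>\delta\}$, where $\mu_{j\cdot}$ is the $j$th row of $\mu$. Asymptotics: $n\to\infty$ with $p=p_n\to\infty$, $s=s_n\to\infty$, $(s+n\log K/\log p)/p\to0$. *)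

theory Defs
  imports "HOL-Probability.Probability"
begin

definition laplace_density :: "real \<Rightarrow> real \<Rightarrow> real" where
  "laplace_density lam x = lam / 2 * exp (- lam * \<bar>x\<bar>)"

definition beta_density :: "real \<Rightarrow> real \<Rightarrow> real \<Rightarrow> real" where
  "beta_density a b x =
     (if 0 < x \<and> x < 1 then x powr (a - 1) * (1 - x) powr (b - 1) / Beta a b else 0)"

definition beta_theta :: "nat \<Rightarrow> real \<Rightarrow> real" where
  "beta_theta p \<kappa> = real p powr (1 + \<kappa>) * ln (real p)"

text \<open>The matrix mu is represented as a
  function on index pairs (j,k) with j < p (row / feature) and k < K (column / cluster),
  i.e. mu (j,k) = mu_{kj}.
  theta ~ Beta(1, beta_theta); xi_j i.i.d. Bernoulli(theta) (True = slab);
  given xi, mu (j,k) independent with density psi(. | lambda1) if xi_j else psi(. | lambda0).\<close>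
definition ssl_prior :: "nat \<Rightarrow> nat \<Rightarrow> real \<Rightarrow> real \<Rightarrow> real \<Rightarrow> (nat \<times> nat \<Rightarrow> real) measure" where
  "ssl_prior p K \<kappa> lam0 lam1 =
     density lborel (\<lambda>t. ennreal (beta_density 1 (beta_theta p \<kappa>) t)) \<bind> (\<lambda>\<theta>.
       PiM {..<p} (\<lambda>_. measure_pmf (bernoulli_pmf \<theta>)) \<bind> (\<lambda>\<xi>.
         PiM ({..<p} \<times> {..<K})
           (\<lambda>(j, k). density lborel (\<lambda>x. ennreal (laplace_density (if \<xi> j then lam1 else lam0) x)))))"

definition supp_soft :: "nat \<Rightarrow> nat \<Rightarrow> real \<Rightarrow> (nat \<times> nat \<Rightarrow> real) \<Rightarrow> nat set" where
  "supp_soft p K \<delta> \<mu> = {j \<in> {..<p}. (\<Sum>k<K. \<bar>\<mu> (j, k)\<bar>) > \<delta>}"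

end

theory Submission
  imports Defs "HOL-Real_Asymp.Real_Asymp"
begin

text \<open>
  A union bound over the sets \<open>S\<close> of \<open>m = \<lceil>x\<rceil>\<close> rows reduces the event to
  \<open>(p choose m)\<close> events "every row of \<open>S\<close> has \<open>\<ell>\<^sub>1\<close>-norm above \<open>\<delta>\<close>". Given the
  inclusion indicators, a slab row contributes the trivial factor 1, while a spike row is
  controlled by a Chernoff bound for \<open>K\<close> independent Laplace(\<open>\<lambda>\<^sub>0\<close>) entries, tilted at
  \<open>t = \<lambda>\<^sub>0 (1 - 1/log log p)\<close>; this gives a factor \<open>b\<close> with \<open>2 p b \<le> p^(-\<kappa>/2)\<close>
  thanks to \<open>K log log p \<le> log p\<close>. Averaging over \<open>\<theta>\<close> leaves
  \<open>E (\<theta> + b)^m \<le> 2^m (m!/\<beta>\<^sub>\<theta>^m + b^m)\<close>, and \<open>(p choose m) m! \<le> p^m\<close> with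
  \<open>\<beta>\<^sub>\<theta> = p^(1+\<kappa>) log p\<close> bounds the probability by \<open>2 p^(-\<kappa> m/2)\<close>, which is at most
  \<open>exp(-\<kappa>/4 (s log p + n log K))\<close> for \<open>\<beta> = 1\<close>.
\<close>

subsection \<open>Laplace distribution\<close>

abbreviation laplace_measure :: "real \<Rightarrow> real measure" where
  "laplace_measure l \<equiv> density lborel (\<lambda>x. ennreal (laplace_density l x))"

lemma laplace_density_measurable[measurable]: "laplace_density l \<in> borel_measurable borel"
  unfolding laplace_density_def by measurable

lemma ennreal_laplace_density_nonpos: "l \<le> 0 \<Longrightarrow> ennreal (laplace_density l x) = 0"
  unfolding laplace_density_def by (intro ennreal_neg) (simp add: mult_nonpos_nonneg)

lemma laplace_measure_nonpos: "l \<le> 0 \<Longrightarrow> laplace_measure l = null_measure lborel"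
  by (simp add: ennreal_laplace_density_nonpos null_measure_eq_density)

lemma nn_integral_lborel_reflect:
  fixes f :: "real \<Rightarrow> ennreal"
  assumes "f \<in> borel_measurable borel"
  shows "(\<integral>\<^sup>+x. f (- x) \<partial>lborel) = (\<integral>\<^sup>+x. f x \<partial>lborel)"
proof -
  have "(\<integral>\<^sup>+x. f x \<partial>lborel) = (\<integral>\<^sup>+x. f x \<partial>distr lborel borel uminus)"
    by (simp add: lborel_distr_uminus)
  also have "\<dots> = (\<integral>\<^sup>+x. f (- x) \<partial>lborel)"
    using assms by (subst nn_integral_distr) auto
  finally show ?thesis by simp
qed

lemma nn_integral_exponential_density:
  assumes "a > 0"
  shows "(\<integral>\<^sup>+x. ennreal (exponential_density a x) \<partial>lborel) = 1"
proof -
  interpret prob_space "density lborel (exponential_density a)"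
    using prob_space_exponential_density[OF assms] .
  show ?thesis
    using emeasure_space_1 by (simp add: emeasure_density)
qed

text \<open>The Laplace density times \<open>e\<^sup>t\<^sup>|\<^sup>x\<^sup>|\<close> is \<open>l/(2(l-t))\<close> times the sum of
  two reflected exponential densities with rate \<open>l - t\<close>.\<close>
lemma nn_integral_laplace_exp_abs_le:
  assumes l: "l > 0" and t: "0 \<le> t" "t < l"
  shows "(\<integral>\<^sup>+x. ennreal (laplace_density l x) * ennreal (exp (t * \<bar>x\<bar>)) \<partial>lborel)
         \<le> ennreal (l / (l - t))"
proof -
  define a where "a = l - t"
  have a: "a > 0" using t unfolding a_def by simp
  define e where "e = (\<lambda>x. ennreal (exponential_density a x))"
  have e_measurable: "e \<in> borel_measurable borel" unfolding e_def by measurable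
  have e_nonneg: "0 \<le> exponential_density a y" for y
    using a by (simp add: exponential_density_def)
  have pointwise: "ennreal (laplace_density l x) * ennreal (exp (t * \<bar>x\<bar>))
        \<le> ennreal (l / (2 * a)) * (e x + e (- x))" for x
  proof -
    have "ennreal (laplace_density l x) * ennreal (exp (t * \<bar>x\<bar>))
        = ennreal (l / 2 * exp (- a * \<bar>x\<bar>))"
      using l unfolding laplace_density_def a_def
      by (simp add: ennreal_mult'[symmetric] mult.assoc exp_add[symmetric] algebra_simps)
    also have "\<dots> \<le> ennreal (l / (2 * a) * (exponential_density a x + exponential_density a (- x)))"
      using a l by (intro ennreal_leI) (auto simp: exponential_density_def field_simps)
    also have "\<dots> = ennreal (l / (2 * a)) * (e x + e (- x))"
      unfolding e_def using a l e_nonneg[of x] e_nonneg[of "- x"]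
      by (subst ennreal_mult) (auto simp: ennreal_plus)
    finally show ?thesis .
  qed
  have "(\<integral>\<^sup>+x. ennreal (laplace_density l x) * ennreal (exp (t * \<bar>x\<bar>)) \<partial>lborel)
        \<le> (\<integral>\<^sup>+x. ennreal (l / (2 * a)) * (e x + e (- x)) \<partial>lborel)"
    by (intro nn_integral_mono pointwise)
  also have "\<dots> = ennreal (l / (2 * a)) * ((\<integral>\<^sup>+x. e x \<partial>lborel) + (\<integral>\<^sup>+x. e (- x) \<partial>lborel))"
    using e_measurable by (simp add: nn_integral_cmult nn_integral_add)
  also have "\<dots> = ennreal (l / (2 * a)) * 2"
    using nn_integral_lborel_reflect[OF e_measurable] nn_integral_exponential_density[OF a]
    unfolding e_def by simp
  also have "\<dots> = ennreal (l / a)"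
    using a l by (subst ennreal_numeral[symmetric], subst ennreal_mult[symmetric]) auto
  finally show ?thesis unfolding a_def .
qed

lemma subprob_space_laplace_measure: "subprob_space (laplace_measure l)"
proof (rule subprob_spaceI)
  show "emeasure (laplace_measure l) (space (laplace_measure l)) \<le> 1"
  proof (cases "l > 0")
    case True
    have "emeasure (laplace_measure l) (space (laplace_measure l))
        = (\<integral>\<^sup>+x. ennreal (laplace_density l x) * ennreal (exp (0 * \<bar>x\<bar>)) \<partial>lborel)"
      by (simp add: emeasure_density)
    also have "\<dots> \<le> ennreal (l / (l - 0))"
      by (rule nn_integral_laplace_exp_abs_le) (use True in auto)
    finally show ?thesis using True by simp
  next
    case False
    then show ?thesis by (simp add: emeasure_density ennreal_laplace_density_nonpos)
  qed
qed simp

lemma nn_integral_laplace_exp_abs_diff_le: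
  assumes l: "l > 0" and t: "0 \<le> t" "t < l"
  shows "(\<integral>\<^sup>+x. ennreal (exp (t * \<bar>x\<bar> - u)) \<partial>laplace_measure l)
         \<le> ennreal (exp (- u) * (l / (l - t)))"
proof -
  have "(\<integral>\<^sup>+x. ennreal (exp (t * \<bar>x\<bar> - u)) \<partial>laplace_measure l)
     = (\<integral>\<^sup>+x. ennreal (exp (- u)) * (ennreal (laplace_density l x) * ennreal (exp (t * \<bar>x\<bar>))) \<partial>lborel)"
    by (subst nn_integral_density)
       (auto simp: exp_diff ennreal_mult'[symmetric] exp_minus field_simps intro!: nn_integral_cong)
  also have "\<dots> = ennreal (exp (- u))
      * (\<integral>\<^sup>+x. ennreal (laplace_density l x) * ennreal (exp (t * \<bar>x\<bar>)) \<partial>lborel)"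
    by (rule nn_integral_cmult) (simp add: laplace_density_def)
  also have "\<dots> \<le> ennreal (exp (- u)) * ennreal (l / (l - t))"
    by (intro mult_left_mono nn_integral_laplace_exp_abs_le l t) simp
  also have "\<dots> = ennreal (exp (- u) * (l / (l - t)))"
    using l t by (subst ennreal_mult) auto
  finally show ?thesis .
qed

text \<open>The tilt \<open>t = l (1 - 1/y)\<close> turns the factor \<open>l/(l - t)\<close> into \<open>y\<close>.\<close>
lemma laplace_tilt_exists:
  assumes y: "y > 1" and l\<delta>: "l > 0 \<Longrightarrow> l * \<delta> = T"
  shows "\<exists>t\<ge>0. (\<integral>\<^sup>+x. ennreal (exp (t * \<bar>x\<bar> - t * \<delta> / real K)) \<partial>laplace_measure l)
                \<le> ennreal (exp (- ((1 - 1 / y) * T / real K)) * y)"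
proof (cases "l > 0")
  case True
  define t where "t = l * (1 - 1 / y)"
  have t: "t \<ge> 0" "t < l" unfolding t_def using True y by (auto simp: field_simps)
  have "exp (- (t * \<delta> / real K)) * (l / (l - t)) = exp (- ((1 - 1 / y) * T / real K)) * y"
    using True y l\<delta> unfolding t_def by (simp add: field_simps)
  then show ?thesis
    using nn_integral_laplace_exp_abs_diff_le[OF True t, of "t * \<delta> / real K"] t by auto
next
  case False
  then show ?thesis by (intro exI[of _ 0]) (simp add: laplace_measure_nonpos)
qed

subsection \<open>The entries given the inclusion indicators\<close>

definition ssl_entries ::
    "nat \<Rightarrow> nat \<Rightarrow> real \<Rightarrow> real \<Rightarrow> (nat \<Rightarrow> bool) \<Rightarrow> (nat \<times> nat \<Rightarrow> real) measure" where
  "ssl_entries p K l0 l1 \<xi> = PiM ({..<p} \<times> {..<K}) (\<lambda>(j, k). laplace_measure (if \<xi> j then l1 else l0))"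

lemma product_sigma_finite_laplace:
  "product_sigma_finite (\<lambda>(j, k). laplace_measure (if \<xi> j then l1 else l0))"
  unfolding product_sigma_finite_def
  by (simp add: split_beta subprob_space_imp_sigma_finite[OF subprob_space_laplace_measure])

lemma indicator_sum_abs_gt_le_prod_exp:
  fixes x :: "nat \<Rightarrow> real"
  assumes t: "t \<ge> 0" and K: "K > 0"
  shows "indicator {\<delta><..} (\<Sum>k<K. \<bar>x k\<bar>)
         \<le> (\<Prod>k<K. ennreal (exp (t * \<bar>x k\<bar> - t * \<delta> / real K)))"
proof -
  have "(\<Prod>k<K. exp (t * \<bar>x k\<bar> - t * \<delta> / real K)) = exp (t * ((\<Sum>k<K. \<bar>x k\<bar>) - \<delta>))"
    using K by (simp add: exp_sum[symmetric] sum_subtractf sum_distrib_left algebra_simps)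
  moreover have "indicator {\<delta><..} (\<Sum>k<K. \<bar>x k\<bar>) \<le> exp (t * ((\<Sum>k<K. \<bar>x k\<bar>) - \<delta>))"
    using t by (auto simp: indicator_def)
  ultimately show ?thesis
    by (simp add: prod_ennreal ennreal_leI ennreal_indicator[symmetric] del: ennreal_indicator)
qed

lemma nn_integral_ssl_entries_rows_exceed_le:
  fixes \<xi> :: "nat \<Rightarrow> bool" and S :: "nat set"
  assumes S: "S \<subseteq> {..<p}" and t: "t \<ge> 0" and K: "K > 0"
    and spike: "(\<integral>\<^sup>+x. ennreal (exp (t * \<bar>x\<bar> - t * \<delta> / real K)) \<partial>laplace_measure l0) \<le> c"
  shows "(\<integral>\<^sup>+\<mu>. (\<Prod>j\<in>S. indicator {\<delta><..} (\<Sum>k<K. \<bar>\<mu> (j, k)\<bar>)) \<partial>ssl_entries p K l0 l1 \<xi>)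
         \<le> (\<Prod>j\<in>S. if \<xi> j then 1 else c ^ K)"
proof -
  define M where "M = (\<lambda>(j::nat, k::nat). laplace_measure (if \<xi> j then l1 else l0))"
  interpret product_sigma_finite M unfolding M_def by (rule product_sigma_finite_laplace)
  define I where "I = {..<p} \<times> {..<K}"
  define g where "g = (\<lambda>(j::nat, k::nat) (x::real).
    if j \<in> S \<and> \<not> \<xi> j then ennreal (exp (t * \<bar>x\<bar> - t * \<delta> / real K)) else 1)"
  have restrict: "(\<Prod>j\<in>S. f j) = (\<Prod>j<p. if j \<in> S then f j else 1)" for f :: "nat \<Rightarrow> ennreal"
    using S by (simp add: prod.If_cases Int_absorb1)
  have pointwise: "(\<Prod>j\<in>S. indicator {\<delta><..} (\<Sum>k<K. \<bar>\<mu> (j, k)\<bar>)) \<le> (\<Prod>i\<in>I. g i (\<mu> i))"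
    for \<mu> :: "nat \<times> nat \<Rightarrow> real"
  proof -
    have "(\<Prod>j\<in>S. indicator {\<delta><..} (\<Sum>k<K. \<bar>\<mu> (j, k)\<bar>))
        \<le> (\<Prod>j<p. \<Prod>k<K. g (j, k) (\<mu> (j, k)))"
      unfolding restrict
    proof (rule prod_mono_ennreal)
      fix j
      show "(if j \<in> S then indicator {\<delta><..} (\<Sum>k<K. \<bar>\<mu> (j, k)\<bar>) else 1)
          \<le> (\<Prod>k<K. g (j, k) (\<mu> (j, k)))"
        using indicator_sum_abs_gt_le_prod_exp[OF t K, of \<delta> "\<lambda>k. \<mu> (j, k)"]
        by (cases "j \<in> S \<and> \<not> \<xi> j") (auto simp: g_def indicator_def)
    qed
    also have "\<dots> = (\<Prod>i\<in>I. g i (\<mu> i))"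
      unfolding I_def by (subst prod.cartesian_product) (simp add: case_prod_beta)
    finally show ?thesis .
  qed
  have "(\<integral>\<^sup>+\<mu>. (\<Prod>j\<in>S. indicator {\<delta><..} (\<Sum>k<K. \<bar>\<mu> (j, k)\<bar>)) \<partial>ssl_entries p K l0 l1 \<xi>)
      \<le> (\<integral>\<^sup>+\<mu>. (\<Prod>i\<in>I. g i (\<mu> i)) \<partial>PiM I M)"
    unfolding ssl_entries_def M_def[symmetric] I_def[symmetric] by (intro nn_integral_mono pointwise)
  also have "\<dots> = (\<Prod>i\<in>I. integral\<^sup>N (M i) (g i))"
    unfolding I_def by (rule product_nn_integral_prod) (auto simp: g_def M_def split: prod.splits)
  also have "\<dots> \<le> (\<Prod>(j, k)\<in>I. if j \<in> S \<and> \<not> \<xi> j then c else 1)"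
  proof (rule prod_mono_ennreal, clarify)
    fix j k
    show "integral\<^sup>N (M (j, k)) (g (j, k)) \<le> (if j \<in> S \<and> \<not> \<xi> j then c else 1)"
      using spike subprob_space.emeasure_space_le_1[OF subprob_space_laplace_measure]
      by (auto simp: M_def g_def)
  qed
  also have "\<dots> = (\<Prod>j\<in>S. if \<xi> j then 1 else c ^ K)"
    unfolding restrict I_def by (subst prod.cartesian_product[symmetric]) (auto intro!: prod.cong)
  finally show ?thesis .
qed

subsection \<open>The inclusion indicators given \<open>\<theta>\<close>\<close>

definition ssl_inclusion :: "nat \<Rightarrow> real \<Rightarrow> (nat \<Rightarrow> bool) measure" where
  "ssl_inclusion p \<theta> = PiM {..<p} (\<lambda>_. measure_pmf (bernoulli_pmf \<theta>))"

lemma nn_integral_bernoulli_if_le: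
  assumes b: "b \<ge> 0"
  shows "(\<integral>\<^sup>+x. (if x then 1 else ennreal b) \<partial>measure_pmf (bernoulli_pmf \<theta>))
         \<le> ennreal (pmf (bernoulli_pmf \<theta>) True + b)"
proof -
  have "(\<integral>\<^sup>+x. (if x then 1 else ennreal b) \<partial>measure_pmf (bernoulli_pmf \<theta>))
      = ennreal (pmf (bernoulli_pmf \<theta>) True) + ennreal (pmf (bernoulli_pmf \<theta>) False) * ennreal b"
    by (subst nn_integral_measure_pmf, subst nn_integral_count_space_finite) (auto simp: UNIV_bool)
  also have "\<dots> \<le> ennreal (pmf (bernoulli_pmf \<theta>) True) + 1 * ennreal b"
    by (intro add_left_mono mult_right_mono) (auto simp: pmf_le_1)
  also have "\<dots> = ennreal (pmf (bernoulli_pmf \<theta>) True + b)"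
    using b by (simp add: ennreal_plus)
  finally show ?thesis .
qed

lemma nn_integral_ssl_inclusion_prod_le:
  assumes S: "S \<subseteq> {..<p}" and b: "b \<ge> 0"
  shows "(\<integral>\<^sup>+\<xi>. (\<Prod>j\<in>S. if \<xi> j then 1 else ennreal b) \<partial>ssl_inclusion p \<theta>)
         \<le> ennreal ((pmf (bernoulli_pmf \<theta>) True + b) ^ card S)"
proof -
  interpret product_sigma_finite "\<lambda>_::nat. measure_pmf (bernoulli_pmf \<theta>)"
    unfolding product_sigma_finite_def by (simp add: prob_space_imp_sigma_finite prob_space_measure_pmf)
  define f where "f = (\<lambda>j (x::bool). if j \<in> S then (if x then 1 else ennreal b) else 1)"
  have restrict: "(\<Prod>j\<in>S. h j) = (\<Prod>j<p. if j \<in> S then h j else 1)" for h :: "nat \<Rightarrow> ennreal"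
    using S by (simp add: prod.If_cases Int_absorb1)
  have "(\<integral>\<^sup>+\<xi>. (\<Prod>j\<in>S. if \<xi> j then 1 else ennreal b) \<partial>ssl_inclusion p \<theta>)
      = (\<integral>\<^sup>+\<xi>. (\<Prod>j<p. f j (\<xi> j)) \<partial>ssl_inclusion p \<theta>)"
    unfolding restrict f_def by (intro nn_integral_cong prod.cong) auto
  also have "\<dots> = (\<Prod>j<p. \<integral>\<^sup>+x. f j x \<partial>measure_pmf (bernoulli_pmf \<theta>))"
    unfolding ssl_inclusion_def by (rule product_nn_integral_prod) auto
  also have "\<dots> \<le> (\<Prod>j<p. if j \<in> S then ennreal (pmf (bernoulli_pmf \<theta>) True + b) else 1)"
    unfolding f_def using nn_integral_bernoulli_if_le[OF b, of \<theta>]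
    by (intro prod_mono_ennreal) (auto simp: measure_pmf.emeasure_space_1)
  also have "\<dots> = ennreal ((pmf (bernoulli_pmf \<theta>) True + b) ^ card S)"
    unfolding restrict[symmetric] using b by (simp add: ennreal_power[symmetric] del: ennreal_plus)
  finally show ?thesis .
qed

subsection \<open>Moments of \<open>Beta(1, B)\<close>\<close>

lemma Gamma_add_nat_ge_power:
  fixes x :: real
  assumes x: "x > 0"
  shows "Gamma (x + 1 + real m) \<ge> x ^ m * Gamma (x + 1)"
proof (induction m)
  case (Suc m)
  have pos: "x + 1 + real m > 0" using x by simp
  have "Gamma (x + 1 + real (Suc m)) = (x + 1 + real m) * Gamma (x + 1 + real m)"
    using pos Gamma_plus1[of "x + 1 + real m"] by (simp add: nonpos_Ints_def add.assoc)
  also have "\<dots> \<ge> x * (x ^ m * Gamma (x + 1))"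
    using Suc pos x Gamma_real_pos[of "x + 1"] by (intro mult_mono) auto
  finally show ?case by (simp add: mult.assoc)
qed simp

lemma Beta_ratio_le_fact_div_power:
  fixes B :: real
  assumes B: "B > 0"
  shows "Beta (real m + 1) B / Beta 1 B \<le> fact m / B ^ m"
proof -
  have Gamma_pos: "Gamma B > 0" "Gamma (B + 1) > 0" "Gamma (B + 1 + real m) > 0"
    using B by (auto intro!: Gamma_real_pos)
  have Gamma_succ: "Gamma (1 + B) = B * Gamma B"
    using B Gamma_plus1[of B] by (auto simp: nonpos_Ints_def add.commute)
  have Gamma_fact': "Gamma (real m + 1) = fact m"
    using Gamma_fact[of m] by (simp add: add.commute)
  have "Beta (real m + 1) B / Beta 1 B = fact m * Gamma (B + 1) / Gamma (B + 1 + real m)"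
    using Gamma_pos Gamma_succ B unfolding Beta_def Gamma_fact' by (simp add: field_simps add_ac)
  also have "\<dots> \<le> fact m * Gamma (B + 1) / (B ^ m * Gamma (B + 1))"
    using Gamma_add_nat_ge_power[OF B, of m] Gamma_pos B
    by (intro divide_left_mono mult_nonneg_nonneg mult_pos_pos) auto
  also have "\<dots> = fact m / B ^ m" using Gamma_pos by simp
  finally show ?thesis .
qed

lemma beta_density_measurable[measurable]: "beta_density a b \<in> borel_measurable borel"
  unfolding beta_density_def by measurable

lemma beta_density_nonneg: "B > 0 \<Longrightarrow> beta_density 1 B \<theta> \<ge> 0"
  by (auto simp: beta_density_def Beta_def Gamma_real_pos intro!: divide_nonneg_pos)

lemma nn_integral_beta_density_power_le:
  assumes B: "B > 0"
  shows "(\<integral>\<^sup>+\<theta>. ennreal (beta_density 1 B \<theta>) * ennreal (\<theta> ^ m) \<partial>lborel)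
         \<le> ennreal (fact m / B ^ m)"
proof -
  define h where "h = (\<lambda>t::real. t powr (real m + 1 - 1) * (1 - t) powr (B - 1))"
  have Beta_pos: "Beta 1 B > 0" using B by (simp add: Beta_def Gamma_real_pos)
  have h_nonneg: "0 \<le> h t" for t by (simp add: h_def)
  have eq: "ennreal (beta_density 1 B t) * ennreal (t ^ m)
      = ennreal (1 / Beta 1 B) * ennreal (indicator {0..1} t * h t)" for t
  proof (cases "0 < t \<and> t < 1")
    case True
    then have "beta_density 1 B t * t ^ m = 1 / Beta 1 B * (indicator {0..1} t * h t)"
      unfolding beta_density_def h_def by (simp add: powr_realpow)
    then show ?thesis
      using True Beta_pos h_nonneg[of t] beta_density_nonneg[OF B, of t]
      by (simp add: ennreal_mult[symmetric])
  next
    case False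
    then show ?thesis
      by (cases "t = 0 \<or> t = 1") (auto simp: beta_density_def h_def indicator_def)
  qed
  have "(h has_integral Beta (real m + 1) B) {0..1}"
    unfolding h_def by (rule has_integral_Beta_real) (use B in auto)
  then have "(\<integral>\<^sup>+t. ennreal (indicator {0..1} t * h t) \<partial>lborel) = ennreal (Beta (real m + 1) B)"
    by (intro nn_integral_has_integral_lebesgue h_nonneg)
  then have "(\<integral>\<^sup>+\<theta>. ennreal (beta_density 1 B \<theta>) * ennreal (\<theta> ^ m) \<partial>lborel)
      = ennreal (1 / Beta 1 B) * ennreal (Beta (real m + 1) B)"
    unfolding eq by (subst nn_integral_cmult) (auto simp: h_def)
  also have "\<dots> = ennreal (Beta (real m + 1) B / Beta 1 B)"
    using Beta_pos B
    by (subst ennreal_mult[symmetric]) (auto simp: Beta_def Gamma_real_pos intro!: less_imp_le)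
  also have "\<dots> \<le> ennreal (fact m / B ^ m)"
    by (intro ennreal_leI Beta_ratio_le_fact_div_power B)
  finally show ?thesis .
qed

subsection \<open>Measurability of the hierarchy\<close>

abbreviation entry_space :: "nat \<Rightarrow> nat \<Rightarrow> (nat \<times> nat \<Rightarrow> real) measure" where
  "entry_space p K \<equiv> PiM ({..<p} \<times> {..<K}) (\<lambda>_. borel)"

abbreviation inclusion_space :: "nat \<Rightarrow> (nat \<Rightarrow> bool) measure" where
  "inclusion_space p \<equiv> PiM {..<p} (\<lambda>_. count_space UNIV)"

lemma measurable_discrete: "sets M = Pow (space M) \<Longrightarrow> f \<in> space M \<rightarrow> space N \<Longrightarrow> f \<in> M \<rightarrow>\<^sub>M N"
  by (auto simp: measurable_def)

lemma sets_ssl_entries: "sets (ssl_entries p K l0 l1 \<xi>) = sets (entry_space p K)"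
  unfolding ssl_entries_def by (intro sets_PiM_cong) auto

lemma subprob_space_ssl_entries: "subprob_space (ssl_entries p K l0 l1 \<xi>)"
proof (rule subprob_spaceI)
  define M where "M = (\<lambda>(j::nat, k::nat). laplace_measure (if \<xi> j then l1 else l0))"
  interpret product_sigma_finite M unfolding M_def by (rule product_sigma_finite_laplace)
  have "emeasure (ssl_entries p K l0 l1 \<xi>) (space (ssl_entries p K l0 l1 \<xi>))
      = (\<Prod>i\<in>{..<p} \<times> {..<K}. emeasure (M i) (space (M i)))"
    unfolding ssl_entries_def M_def[symmetric] space_PiM by (rule emeasure_PiM) auto
  also have "\<dots> \<le> (\<Prod>i\<in>{..<p} \<times> {..<K}. 1)"
    using subprob_space.emeasure_space_le_1[OF subprob_space_laplace_measure]
    by (intro prod_mono_ennreal) (simp add: M_def split: prod.splits)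
  finally show "emeasure (ssl_entries p K l0 l1 \<xi>) (space (ssl_entries p K l0 l1 \<xi>)) \<le> 1"
    by simp
  show "space (ssl_entries p K l0 l1 \<xi>) \<noteq> {}"
    unfolding ssl_entries_def by (simp add: space_PiM PiE_eq_empty_iff split: prod.splits)
qed

lemma sets_inclusion_space: "sets (inclusion_space p) = Pow (space (inclusion_space p))"
proof
  show "Pow (space (inclusion_space p)) \<subseteq> sets (inclusion_space p)"
  proof
    fix A assume A: "A \<in> Pow (space (inclusion_space p))"
    have "finite (space (inclusion_space p))" by (simp add: space_PiM finite_PiE)
    then have "finite A" using A by (auto intro: finite_subset)
    have "{x} = PiE {..<p} (\<lambda>i. {x i})" if "x \<in> A" for x
      using that A by (auto simp: space_PiM PiE_iff extensional_def)
    then have "{x} \<in> sets (inclusion_space p)" if "x \<in> A" for x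
      using that by (metis sets_PiM_I_countable countable_finite finite_lessThan sets_UNIV)
    then have "(\<Union>x\<in>A. {x}) \<in> sets (inclusion_space p)"
      using \<open>finite A\<close> by (intro sets.finite_UN) auto
    then show "A \<in> sets (inclusion_space p)" by simp
  qed
qed (use sets.sets_into_space in auto)

lemma sets_ssl_inclusion: "sets (ssl_inclusion p \<theta>) = sets (inclusion_space p)"
  unfolding ssl_inclusion_def by (intro sets_PiM_cong) auto

lemma sets_ssl_inclusion_Pow: "sets (ssl_inclusion p \<theta>) = Pow (space (ssl_inclusion p \<theta>))"
  using sets_ssl_inclusion[of p \<theta>] sets_inclusion_space[of p] sets_eq_imp_space_eq[OF sets_ssl_inclusion]
  by simp

lemma ssl_entries_measurable:
  "ssl_entries p K l0 l1 \<in> inclusion_space p \<rightarrow>\<^sub>M subprob_algebra (entry_space p K)"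
  by (rule measurable_discrete[OF sets_inclusion_space])
     (auto simp: space_subprob_algebra subprob_space_ssl_entries sets_ssl_entries)

lemma ssl_inclusion_measurable: "ssl_inclusion p \<in> borel \<rightarrow>\<^sub>M subprob_algebra (inclusion_space p)"
proof (rule measurable_subprob_algebra)
  fix \<theta> :: real
  show "subprob_space (ssl_inclusion p \<theta>)" unfolding ssl_inclusion_def
    by (intro prob_space_imp_subprob_space prob_space_PiM prob_space_measure_pmf)
  show "sets (ssl_inclusion p \<theta>) = sets (inclusion_space p)" by (rule sets_ssl_inclusion)
next
  fix A assume A: "A \<in> sets (inclusion_space p)"
  have "finite A" using sets.sets_into_space[OF A]
    by (rule finite_subset) (simp add: space_PiM finite_PiE)
  have singleton: "x \<in> A \<Longrightarrow> {x} = PiE {..<p} (\<lambda>i. {x i})" for x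
    using sets.sets_into_space[OF A] by (auto simp: space_PiM PiE_iff extensional_def)
  have emeasure_eq: "emeasure (ssl_inclusion p \<theta>) A
      = (\<Sum>x\<in>A. \<Prod>i<p. ennreal (pmf (bernoulli_pmf \<theta>) (x i)))" for \<theta>
  proof -
    interpret product_sigma_finite "\<lambda>_::nat. measure_pmf (bernoulli_pmf \<theta>)"
      unfolding product_sigma_finite_def by (simp add: prob_space_imp_sigma_finite prob_space_measure_pmf)
    have "emeasure (ssl_inclusion p \<theta>) A = (\<Sum>x\<in>A. emeasure (ssl_inclusion p \<theta>) {x})"
      using \<open>finite A\<close> singleton
      by (intro emeasure_eq_sum_singleton) (auto simp: ssl_inclusion_def intro!: sets_PiM_I_countable)
    also have "\<dots> = (\<Sum>x\<in>A. \<Prod>i<p. ennreal (pmf (bernoulli_pmf \<theta>) (x i)))"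
      unfolding ssl_inclusion_def
      by (intro sum.cong refl, subst singleton, assumption, subst emeasure_PiM)
         (auto simp: emeasure_pmf_single)
    finally show ?thesis .
  qed
  have "(\<lambda>\<theta>. pmf (bernoulli_pmf \<theta>) b) \<in> borel_measurable borel" for b
    by (cases b) (simp_all add: bernoulli_pmf.rep_eq)
  then show "(\<lambda>\<theta>. emeasure (ssl_inclusion p \<theta>) A) \<in> borel_measurable borel"
    unfolding emeasure_eq by measurable
qed

subsection \<open>A non-asymptotic bound on the soft support size\<close>

abbreviation beta_prior :: "real \<Rightarrow> real measure" where
  "beta_prior B \<equiv> density lborel (\<lambda>t. ennreal (beta_density 1 B t))"

lemma ssl_prior_eq_bind:
  "ssl_prior p K \<kappa> l0 l1
     = beta_prior (beta_theta p \<kappa>) \<bind> (\<lambda>\<theta>. ssl_inclusion p \<theta> \<bind> ssl_entries p K l0 l1)"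
  unfolding ssl_prior_def ssl_inclusion_def ssl_entries_def by simp

lemma one_le_sum_subsets_prod_indicator:
  assumes "finite U" "A \<subseteq> U" "m \<le> card A"
  shows "(1::ennreal) \<le> (\<Sum>S\<in>{S. S \<subseteq> U \<and> card S = m}. \<Prod>j\<in>S. indicator A j)"
proof -
  obtain S where S: "S \<subseteq> A" "card S = m"
    using assms by (meson obtain_subset_with_card_n)
  have "(1::ennreal) = (\<Prod>j\<in>S. indicator A j)"
    using S by (simp add: subset_iff)
  also have "\<dots> \<le> (\<Sum>S\<in>{S. S \<subseteq> U \<and> card S = m}. \<Prod>j\<in>S. indicator A j)"
    using S assms by (intro member_le_sum) auto
  finally show ?thesis .
qed

lemma power_add_le_two_power_mult:
  fixes a b :: real
  assumes "a \<ge> 0" "b \<ge> 0"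
  shows "(a + b) ^ m \<le> 2 ^ m * (a ^ m + b ^ m)"
proof -
  have "(a + b) ^ m \<le> (2 * max a b) ^ m" using assms by (intro power_mono) auto
  also have "\<dots> = 2 ^ m * max a b ^ m" by (simp add: power_mult_distrib)
  also have "max a b ^ m \<le> a ^ m + b ^ m" using assms by (auto simp: max_def)
  finally show ?thesis by simp
qed

lemma nn_integral_beta_prior_shifted_power_le:
  assumes B: "B > 0" and b: "b \<ge> 0"
  shows "(\<integral>\<^sup>+\<theta>. ennreal ((pmf (bernoulli_pmf \<theta>) True + b) ^ m) \<partial>beta_prior B)
         \<le> ennreal (2 ^ m * (fact m / B ^ m + b ^ m))"
proof -
  have pointwise: "ennreal (beta_density 1 B \<theta>) * ennreal ((pmf (bernoulli_pmf \<theta>) True + b) ^ m)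
      \<le> ennreal (2 ^ m) * (ennreal (beta_density 1 B \<theta>) * ennreal (\<theta> ^ m)
                          + ennreal (b ^ m) * ennreal (beta_density 1 B \<theta>))" for \<theta>
  proof (cases "0 < \<theta> \<and> \<theta> < 1")
    case True
    define d where "d = beta_density 1 B \<theta>"
    have d: "d \<ge> 0" unfolding d_def by (rule beta_density_nonneg[OF B])
    have "d * (\<theta> + b) ^ m \<le> d * (2 ^ m * (\<theta> ^ m + b ^ m))"
      using d power_add_le_two_power_mult[of \<theta> b m] True b by (intro mult_left_mono) auto
    then have "ennreal (d * (\<theta> + b) ^ m) \<le> ennreal (2 ^ m * (d * \<theta> ^ m + b ^ m * d))"
      by (intro ennreal_leI) (simp add: algebra_simps)
    then show ?thesis
      using d True b unfolding d_def[symmetric]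
      by (simp add: ennreal_mult[symmetric] ennreal_plus[symmetric] del: ennreal_plus)
  next
    case False
    then have "beta_density 1 B \<theta> = 0" by (auto simp: beta_density_def)
    then show ?thesis by simp
  qed
  have "(\<integral>\<^sup>+\<theta>. ennreal ((pmf (bernoulli_pmf \<theta>) True + b) ^ m) \<partial>beta_prior B)
      = (\<integral>\<^sup>+\<theta>. ennreal (beta_density 1 B \<theta>) * ennreal ((pmf (bernoulli_pmf \<theta>) True + b) ^ m) \<partial>lborel)"
    by (subst nn_integral_density) (auto simp: bernoulli_pmf.rep_eq)
  also have "\<dots> \<le> (\<integral>\<^sup>+\<theta>. ennreal (2 ^ m) * (ennreal (beta_density 1 B \<theta>) * ennreal (\<theta> ^ m)
                          + ennreal (b ^ m) * ennreal (beta_density 1 B \<theta>)) \<partial>lborel)"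
    by (intro nn_integral_mono pointwise)
  also have "\<dots> = ennreal (2 ^ m) * ((\<integral>\<^sup>+\<theta>. ennreal (beta_density 1 B \<theta>) * ennreal (\<theta> ^ m) \<partial>lborel)
                   + ennreal (b ^ m) * (\<integral>\<^sup>+\<theta>. ennreal (beta_density 1 B \<theta>) \<partial>lborel))"
    by (simp add: nn_integral_cmult nn_integral_add)
  also have "\<dots> \<le> ennreal (2 ^ m) * (ennreal (fact m / B ^ m) + ennreal (b ^ m) * 1)"
    using nn_integral_beta_density_power_le[OF B, of m] nn_integral_beta_density_power_le[OF B, of 0]
    by (intro mult_left_mono add_mono) auto
  finally show ?thesis
    using B b by (simp add: ennreal_mult ennreal_plus[symmetric] del: ennreal_plus)
qed

lemma nn_integral_ssl_mixture_union_le: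
  assumes t: "t \<ge> 0" and K: "K > 0" and c: "c \<ge> 0"
    and spike: "(\<integral>\<^sup>+x. ennreal (exp (t * \<bar>x\<bar> - t * \<delta> / real K)) \<partial>laplace_measure l0) \<le> ennreal c"
  shows "(\<integral>\<^sup>+\<mu>. (\<Sum>S\<in>{S. S \<subseteq> {..<p} \<and> card S = m}. \<Prod>j\<in>S. indicator {\<delta><..} (\<Sum>k<K. \<bar>\<mu> (j, k)\<bar>))
            \<partial>(ssl_inclusion p \<theta> \<bind> ssl_entries p K l0 l1))
         \<le> of_nat (p choose m) * ennreal ((pmf (bernoulli_pmf \<theta>) True + c ^ K) ^ m)"
    (is "(\<integral>\<^sup>+\<mu>. (\<Sum>S\<in>?subsets. ?rows S \<mu>) \<partial>_) \<le> _")
proof -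
  define b where "b = c ^ K"
  have b: "b \<ge> 0" unfolding b_def using c by simp
  have cb: "ennreal c ^ K = ennreal b" unfolding b_def using c by (simp add: ennreal_power)
  have ssl_entries_measurable': "ssl_entries p K l0 l1 \<in> ssl_inclusion p \<theta> \<rightarrow>\<^sub>M subprob_algebra (entry_space p K)"
    using ssl_entries_measurable measurable_cong_sets[OF sets_ssl_inclusion refl] by metis
  have rows_measurable: "?rows S \<in> borel_measurable (entry_space p K)" if "S \<in> ?subsets" for S
    by measurable (use that in auto)
  have "(\<integral>\<^sup>+\<mu>. (\<Sum>S\<in>?subsets. ?rows S \<mu>) \<partial>(ssl_inclusion p \<theta> \<bind> ssl_entries p K l0 l1))
      = (\<integral>\<^sup>+\<xi>. (\<integral>\<^sup>+\<mu>. (\<Sum>S\<in>?subsets. ?rows S \<mu>) \<partial>ssl_entries p K l0 l1 \<xi>) \<partial>ssl_inclusion p \<theta>)"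
    using rows_measurable by (intro nn_integral_bind[OF _ ssl_entries_measurable'] borel_measurable_sum)
  also have "\<dots> = (\<integral>\<^sup>+\<xi>. (\<Sum>S\<in>?subsets. \<integral>\<^sup>+\<mu>. ?rows S \<mu> \<partial>ssl_entries p K l0 l1 \<xi>) \<partial>ssl_inclusion p \<theta>)"
    using rows_measurable
    by (intro nn_integral_cong nn_integral_sum) (simp add: measurable_cong_sets[OF sets_ssl_entries refl])
  also have "\<dots> \<le> (\<integral>\<^sup>+\<xi>. (\<Sum>S\<in>?subsets. \<Prod>j\<in>S. if \<xi> j then 1 else ennreal b) \<partial>ssl_inclusion p \<theta>)"
  proof (intro nn_integral_mono sum_mono)
    fix \<xi> :: "nat \<Rightarrow> bool" and S assume "S \<in> ?subsets"
    then show "(\<integral>\<^sup>+\<mu>. ?rows S \<mu> \<partial>ssl_entries p K l0 l1 \<xi>) \<le> (\<Prod>j\<in>S. if \<xi> j then 1 else ennreal b)"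
      using nn_integral_ssl_entries_rows_exceed_le[OF _ t K spike, of S p l1 \<xi>] unfolding cb by simp
  qed
  also have "\<dots> = (\<Sum>S\<in>?subsets. \<integral>\<^sup>+\<xi>. (\<Prod>j\<in>S. if \<xi> j then 1 else ennreal b) \<partial>ssl_inclusion p \<theta>)"
    by (intro nn_integral_sum measurable_discrete sets_ssl_inclusion_Pow) simp
  also have "\<dots> \<le> (\<Sum>S\<in>?subsets. ennreal ((pmf (bernoulli_pmf \<theta>) True + b) ^ m))"
    using nn_integral_ssl_inclusion_prod_le[OF _ b] by (intro sum_mono) auto
  also have "\<dots> = of_nat (p choose m) * ennreal ((pmf (bernoulli_pmf \<theta>) True + b) ^ m)"
    using n_subsets[of "{..<p}" m] by simp
  finally show ?thesis unfolding b_def .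
qed

lemma ssl_mixture_measurable:
  "(\<lambda>\<theta>. ssl_inclusion p \<theta> \<bind> ssl_entries p K l0 l1) \<in> beta_prior B \<rightarrow>\<^sub>M subprob_algebra (entry_space p K)"
proof -
  have "ssl_inclusion p \<in> beta_prior B \<rightarrow>\<^sub>M subprob_algebra (inclusion_space p)"
    using ssl_inclusion_measurable by (simp add: measurable_cong_sets[OF sets_density refl])
  then show ?thesis by (rule measurable_bind2[OF _ ssl_entries_measurable])
qed

lemma sets_ssl_prior: "sets (ssl_prior p K \<kappa> l0 l1) = sets (entry_space p K)"
  unfolding ssl_prior_eq_bind
proof (rule sets_bind)
  fix \<theta>
  have "space (ssl_inclusion p \<theta>) \<noteq> {}"
    unfolding ssl_inclusion_def by (simp add: space_PiM PiE_eq_empty_iff)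
  then show "sets (ssl_inclusion p \<theta> \<bind> ssl_entries p K l0 l1) = sets (entry_space p K)"
    by (intro sets_bind) (auto simp: sets_ssl_entries)
qed simp

lemma emeasure_ssl_prior_card_supp_soft_ge_le:
  fixes x :: real
  assumes K: "K > 0" and t: "t \<ge> 0" and c: "c \<ge> 0"
    and spike: "(\<integral>\<^sup>+y. ennreal (exp (t * \<bar>y\<bar> - t * \<delta> / real K)) \<partial>laplace_measure l0) \<le> ennreal c"
    and B: "beta_theta p \<kappa> > 0"
  defines "m \<equiv> nat \<lceil>x\<rceil>"
  shows "emeasure (ssl_prior p K \<kappa> l0 l1)
           {\<mu> \<in> space (ssl_prior p K \<kappa> l0 l1). x \<le> real (card (supp_soft p K \<delta> \<mu>))}
         \<le> ennreal (real (p choose m) * (2 ^ m * (fact m / beta_theta p \<kappa> ^ m + (c ^ K) ^ m)))"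
proof -
  define P where "P = ssl_prior p K \<kappa> l0 l1"
  define E where "E = {\<mu> \<in> space P. x \<le> real (card (supp_soft p K \<delta> \<mu>))}"
  define subsets where "subsets = {S. S \<subseteq> {..<p} \<and> card S = m}"
  define F where "F = (\<lambda>\<mu>. \<Sum>S\<in>subsets. \<Prod>j\<in>S. indicator {\<delta><..} (\<Sum>k<K. \<bar>\<mu> (j, k)\<bar>) :: ennreal)"
  have rows_measurable: "(\<lambda>\<mu>. \<Prod>j\<in>S. indicator {\<delta><..} (\<Sum>k<K. \<bar>\<mu> (j, k)\<bar>) :: ennreal)
      \<in> borel_measurable (entry_space p K)" if "S \<in> subsets" for S
    by measurable (use that in \<open>auto simp: subsets_def\<close>)
  have F_measurable: "F \<in> borel_measurable P"
    unfolding F_def P_def measurable_cong_sets[OF sets_ssl_prior refl]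
    using rows_measurable by (rule borel_measurable_sum)
  have union_bound: "indicator E \<mu> \<le> F \<mu>" for \<mu>
  proof (cases "\<mu> \<in> E")
    case True
    then have "x \<le> real (card (supp_soft p K \<delta> \<mu>))" unfolding E_def by simp
    then have "m \<le> card (supp_soft p K \<delta> \<mu>)" unfolding m_def by linarith
    then have "1 \<le> (\<Sum>S\<in>subsets. \<Prod>j\<in>S. indicator (supp_soft p K \<delta> \<mu>) j :: ennreal)"
      unfolding subsets_def by (intro one_le_sum_subsets_prod_indicator) (auto simp: supp_soft_def)
    also have "\<dots> = F \<mu>"
      unfolding F_def subsets_def
      by (intro sum.cong prod.cong refl) (auto simp: supp_soft_def indicator_def)
    finally show ?thesis using True by simp
  qed simp
  have "emeasure P E \<le> (\<integral>\<^sup>+\<mu>. F \<mu> \<partial>P)"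
  proof (cases "E \<in> sets P")
    case True
    then have "emeasure P E = (\<integral>\<^sup>+\<mu>. indicator E \<mu> \<partial>P)" by simp
    also have "\<dots> \<le> (\<integral>\<^sup>+\<mu>. F \<mu> \<partial>P)" by (intro nn_integral_mono union_bound)
    finally show ?thesis .
  qed (simp add: emeasure_notin_sets)
  also have "\<dots> = (\<integral>\<^sup>+\<theta>. (\<integral>\<^sup>+\<mu>. F \<mu> \<partial>(ssl_inclusion p \<theta> \<bind> ssl_entries p K l0 l1))
                      \<partial>beta_prior (beta_theta p \<kappa>))"
    using F_measurable unfolding P_def ssl_prior_eq_bind
    by (intro nn_integral_bind[OF _ ssl_mixture_measurable])
       (simp add: measurable_cong_sets[OF sets_ssl_prior[unfolded ssl_prior_eq_bind] refl])
  also have "\<dots> \<le> (\<integral>\<^sup>+\<theta>. of_nat (p choose m) * ennreal ((pmf (bernoulli_pmf \<theta>) True + c ^ K) ^ m)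
                      \<partial>beta_prior (beta_theta p \<kappa>))"
    unfolding F_def subsets_def by (intro nn_integral_mono nn_integral_ssl_mixture_union_le[OF t K c spike])
  also have "\<dots> = of_nat (p choose m)
      * (\<integral>\<^sup>+\<theta>. ennreal ((pmf (bernoulli_pmf \<theta>) True + c ^ K) ^ m) \<partial>beta_prior (beta_theta p \<kappa>))"
    by (intro nn_integral_cmult) (simp add: bernoulli_pmf.rep_eq)
  also have "\<dots> \<le> of_nat (p choose m) * ennreal (2 ^ m * (fact m / beta_theta p \<kappa> ^ m + (c ^ K) ^ m))"
    using c by (intro mult_left_mono nn_integral_beta_prior_shifted_power_le B) auto
  finally show ?thesis
    unfolding P_def E_def using B c
    by (subst ennreal_mult) (auto simp: ennreal_of_nat_eq_real_of_nat)
qed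

subsection \<open>Choice of the tilt and the final estimate\<close>

lemma beta_theta_eq_exp: "p > 0 \<Longrightarrow> beta_theta p \<kappa> = exp ((1 + \<kappa>) * ln (real p)) * ln (real p)"
  by (simp add: beta_theta_def powr_def)

lemma binomial_mixture_bound_le:
  fixes B b r :: real
  assumes B: "B > 0" and b: "b \<ge> 0"
    and slab: "2 * real p / B \<le> r" and spike: "2 * real p * b \<le> r"
  shows "real (p choose m) * (2 ^ m * (fact m / B ^ m + b ^ m)) \<le> 2 * r ^ m"
proof -
  have choose_fact: "real (p choose m) * fact m \<le> real p ^ m"
    using binomial_fact_pow[of p m] by (metis of_nat_fact of_nat_le_iff of_nat_mult of_nat_power)
  have "real (p choose m) * 1 \<le> real (p choose m) * fact m"
    by (intro mult_left_mono) auto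
  then have choose: "real (p choose m) \<le> real p ^ m"
    using choose_fact by linarith
  have "real (p choose m) * (2 ^ m * (fact m / B ^ m + b ^ m))
      = 2 ^ m * (real (p choose m) * fact m) / B ^ m + real (p choose m) * (2 ^ m * b ^ m)"
    by (simp add: field_simps)
  also have "\<dots> \<le> 2 ^ m * real p ^ m / B ^ m + real p ^ m * (2 ^ m * b ^ m)"
    using choose_fact choose B b
    by (intro add_mono mult_right_mono divide_right_mono mult_left_mono) auto
  also have "\<dots> = (2 * real p / B) ^ m + (2 * real p * b) ^ m"
    by (simp add: power_mult_distrib power_divide)
  also have "\<dots> \<le> r ^ m + r ^ m"
    using slab spike B b by (intro add_mono power_mono) auto
  finally show ?thesis by simp
qed

lemma two_exp_div_beta_le:
  fixes L \<kappa> :: real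
  assumes L: "L \<ge> 2" and \<kappa>: "\<kappa> > 0"
  shows "2 * exp L / (exp ((1 + \<kappa>) * L) * L) \<le> exp (- \<kappa> * L / 2)"
proof -
  have "2 * exp L / (exp ((1 + \<kappa>) * L) * L) = (2 / L) * exp (- \<kappa> * L)"
    using L by (simp add: field_simps exp_add[symmetric])
  also have "\<dots> \<le> exp (- \<kappa> * L)"
    using L by (intro mult_left_le_one_le) auto
  also have "\<dots> \<le> exp (- \<kappa> * L / 2)"
    using \<kappa> L by simp
  finally show ?thesis .
qed

text \<open>With \<open>y = log log p\<close>, the tilted spike factor \<open>c\<^sup>K\<close> is
  \<open>exp (-(1 - 1/y)(1 + \<kappa>) L) y\<^sup>K\<close>, and \<open>K y \<le> L\<close> bounds \<open>y\<^sup>K\<close> by \<open>exp (L log y / y)\<close>.\<close>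
lemma two_exp_mul_spike_factor_le:
  fixes L y \<kappa> :: real
  assumes K: "K > 0" and y: "y \<ge> 1" and Ky: "real K * y \<le> L"
    and slack: "((1 + \<kappa>) + ln y) / y \<le> \<kappa> / 4" and L: "ln 2 \<le> \<kappa> * L / 4"
  shows "2 * exp L * (exp (- ((1 - 1 / y) * ((1 + \<kappa>) * L) / real K)) * y) ^ K \<le> exp (- \<kappa> * L / 2)"
proof -
  have L_nonneg: "L \<ge> 0" using Ky y by (smt (verit) mult_nonneg_nonneg of_nat_0_le_iff)
  have "y ^ K = exp (real K * ln y)" using y by (simp add: exp_of_nat_mult)
  also have "\<dots> \<le> exp (L * ln y / y)"
  proof -
    have "(real K * y) * ln y \<le> L * ln y"
      using Ky y by (intro mult_right_mono) auto
    then show ?thesis using y by (simp add: field_simps)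
  qed
  finally have y_pow: "y ^ K \<le> exp (L * ln y / y)" .
  have "(exp (- ((1 - 1 / y) * ((1 + \<kappa>) * L) / real K)) * y) ^ K
      = exp (- ((1 - 1 / y) * ((1 + \<kappa>) * L))) * y ^ K"
    using K by (simp add: power_mult_distrib exp_of_nat_mult[symmetric])
  then have "2 * exp L * (exp (- ((1 - 1 / y) * ((1 + \<kappa>) * L) / real K)) * y) ^ K
      \<le> 2 * exp L * (exp (- ((1 - 1 / y) * ((1 + \<kappa>) * L))) * exp (L * ln y / y))"
    using y_pow by simp
  also have "\<dots> = exp (ln 2 + L - (1 - 1 / y) * ((1 + \<kappa>) * L) + L * ln y / y)"
    by (simp add: exp_add exp_diff exp_minus field_simps)
  also have "\<dots> \<le> exp (- \<kappa> * L / 2)"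
  proof (subst exp_le_cancel_iff)
    have "(1 - 1 / y) * ((1 + \<kappa>) * L) - L * ln y / y = L + \<kappa> * L - L * (((1 + \<kappa>) + ln y) / y)"
      using y by (simp add: field_simps)
    moreover have "L * (((1 + \<kappa>) + ln y) / y) \<le> L * (\<kappa> / 4)"
      using slack L_nonneg by (intro mult_left_mono)
    ultimately show "ln 2 + L - (1 - 1 / y) * ((1 + \<kappa>) * L) + L * ln y / y \<le> - \<kappa> * L / 2"
      using L by (simp add: field_simps)
  qed
  finally show ?thesis .
qed

lemma two_mul_exp_power_le:
  fixes \<kappa> L x :: real
  assumes \<kappa>: "\<kappa> > 0" and L: "L \<ge> 0" and x: "x \<le> real m" and two: "ln 2 \<le> \<kappa> * (L * x) / 4"
  shows "2 * exp (- \<kappa> * L / 2) ^ m \<le> exp (- (\<kappa> / 4) * (L * x))"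
proof -
  have "exp (- \<kappa> * L / 2) ^ m = exp (- \<kappa> * (L * real m) / 2)"
    by (simp add: exp_of_nat_mult[symmetric] algebra_simps)
  also have "\<dots> \<le> exp (- \<kappa> * (L * x) / 2)"
    using \<kappa> L x by (simp add: mult_left_mono)
  also have "exp (- \<kappa> * (L * x) / 2) = exp (ln 2 + - \<kappa> * (L * x) / 2) / 2"
    by (subst exp_add) simp
  also have "\<dots> \<le> exp (- (\<kappa> / 4) * (L * x)) / 2"
    using two by (intro divide_right_mono) auto
  finally show ?thesis by simp
qed

lemma ssl_prior_soft_support_tail_le:
  fixes p s K n :: nat and \<kappa> l0 l1 :: real
  assumes \<kappa>: "\<kappa> > 0" and K: "K \<ge> 1" and K_cond: "real K * ln (ln (real p)) \<le> ln (real p)"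
    and loglog: "ln (ln (real p)) \<ge> 2"
    and slack: "((1 + \<kappa>) + ln (ln (ln (real p)))) / ln (ln (real p)) \<le> \<kappa> / 4"
    and p_large: "ln 2 \<le> \<kappa> * ln (real p) / 4"
    and s_large: "ln 2 \<le> \<kappa> * real s / 4"
  shows "measure (ssl_prior p K \<kappa> l0 l1)
           {\<mu> \<in> space (ssl_prior p K \<kappa> l0 l1).
              real (card (supp_soft p K ((1 + \<kappa>) * ln (real p) / l0) \<mu>))
                \<ge> real s + real n * ln (real K) / ln (real p)}
         \<le> exp (- (\<kappa> / 4) * (real s * ln (real p) + real n * ln (real K)))"
proof -
  define L where "L = ln (real p)"
  define y where "y = ln L"
  define x where "x = real s + real n * ln (real K) / L"
  define m where "m = nat \<lceil>x\<rceil>"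
  have "p \<noteq> 0" using loglog by (intro notI) simp
  then have L_nonneg: "L \<ge> 0" unfolding L_def by simp
  have "L \<noteq> 0" using loglog unfolding L_def by (intro notI) simp
  then have L_exp: "L = exp y" unfolding y_def using L_nonneg by simp
  have y: "y \<ge> 2" using loglog unfolding y_def L_def .
  have "L \<ge> 2"
    using L_exp exp_ge_add_one_self[of y] y by linarith
  then have p_exp: "real p = exp L" and B: "beta_theta p \<kappa> = exp ((1 + \<kappa>) * L) * L"
    using \<open>p \<noteq> 0\<close> beta_theta_eq_exp[of p \<kappa>] unfolding L_def by simp_all
  have Lx: "L * x = real s * L + real n * ln (real K)"
    using \<open>L \<ge> 2\<close> unfolding x_def by (simp add: distrib_left)
  define c where "c = exp (- ((1 - 1 / y) * ((1 + \<kappa>) * L) / real K)) * y"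
  have c: "c \<ge> 0" unfolding c_def using y by simp
  obtain t where t: "t \<ge> 0" and spike:
    "(\<integral>\<^sup>+z. ennreal (exp (t * \<bar>z\<bar> - t * ((1 + \<kappa>) * L / l0) / real K)) \<partial>laplace_measure l0) \<le> ennreal c"
    using laplace_tilt_exists[of y l0 "(1 + \<kappa>) * L / l0" "(1 + \<kappa>) * L" K] y unfolding c_def by auto
  have "measure (ssl_prior p K \<kappa> l0 l1)
          {\<mu> \<in> space (ssl_prior p K \<kappa> l0 l1). x \<le> real (card (supp_soft p K ((1 + \<kappa>) * L / l0) \<mu>))}
      \<le> real (p choose m) * (2 ^ m * (fact m / beta_theta p \<kappa> ^ m + (c ^ K) ^ m))"
    using emeasure_ssl_prior_card_supp_soft_ge_le[OF _ t c spike, of p \<kappa> l1 x] K B \<open>L \<ge> 2\<close> c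
    unfolding measure_def m_def by (intro enn2real_leI) auto
  also have "\<dots> \<le> 2 * exp (- \<kappa> * L / 2) ^ m"
  proof (rule binomial_mixture_bound_le)
    show "2 * real p / beta_theta p \<kappa> \<le> exp (- \<kappa> * L / 2)"
      unfolding p_exp B using two_exp_div_beta_le[OF \<open>L \<ge> 2\<close> \<kappa>] .
    show "2 * real p * c ^ K \<le> exp (- \<kappa> * L / 2)"
      unfolding p_exp c_def
      using K K_cond slack p_large y
      by (intro two_exp_mul_spike_factor_le) (auto simp: L_def y_def mult.commute)
  qed (use B \<open>L \<ge> 2\<close> c in auto)
  also have "\<dots> \<le> exp (- (\<kappa> / 4) * (L * x))"
  proof (rule two_mul_exp_power_le[OF \<kappa> L_nonneg])
    show "x \<le> real m" unfolding m_def by linarith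
    have "real s * 1 \<le> real s * L" using \<open>L \<ge> 2\<close> by (intro mult_left_mono) auto
    moreover have "0 \<le> real n * ln (real K)" using K by simp
    ultimately have "real s \<le> L * x" unfolding Lx by linarith
    then show "ln 2 \<le> \<kappa> * (L * x) / 4"
      using s_large \<kappa> by (smt (verit) divide_right_mono mult_left_mono)
  qed
  also have "L * x = real s * ln (real p) + real n * ln (real K)"
    using Lx by (simp add: L_def)
  finally show ?thesis unfolding x_def L_def .
qed

lemma eventually_loglog_conditions:
  fixes P :: "'a \<Rightarrow> real" and \<kappa> :: real
  assumes \<kappa>: "\<kappa> > 0" and P: "filterlim P at_top F"
  shows "\<forall>\<^sub>F x in F. ln (ln (P x)) \<ge> 2
           \<and> ((1 + \<kappa>) + ln (ln (ln (P x)))) / ln (ln (P x)) \<le> \<kappa> / 4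
           \<and> ln 2 \<le> \<kappa> * ln (P x) / 4"
proof -
  have lnP: "filterlim (\<lambda>x. ln (P x)) at_top F"
    by (rule filterlim_compose[OF ln_at_top P])
  have lnlnP: "filterlim (\<lambda>x. ln (ln (P x))) at_top F"
    by (rule filterlim_compose[OF ln_at_top lnP])
  have "((\<lambda>y::real. ((1 + \<kappa>) + ln y) / y) \<longlongrightarrow> 0) at_top"
    by real_asymp
  then have "\<forall>\<^sub>F y in at_top. ((1 + \<kappa>) + ln y) / y < \<kappa> / 4"
    using \<kappa> by (intro order_tendstoD(2)) auto
  then have slack: "\<forall>\<^sub>F x in F. ((1 + \<kappa>) + ln (ln (ln (P x)))) / ln (ln (P x)) < \<kappa> / 4"
    by (rule eventually_compose_filterlim[OF _ lnlnP])
  have "\<forall>\<^sub>F x in F. 4 * ln 2 / \<kappa> \<le> ln (P x)"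
    using lnP by (simp add: filterlim_at_top)
  moreover have "\<forall>\<^sub>F x in F. 2 \<le> ln (ln (P x))"
    using lnlnP by (simp add: filterlim_at_top)
  ultimately show ?thesis
    using slack by eventually_elim (use \<kappa> in \<open>auto simp: field_simps\<close>)
qed

theorem mainTheorem9:
  fixes p s K :: "nat \<Rightarrow> nat"
    and \<kappa> :: real
    and lam0 lam1 :: "nat \<Rightarrow> real"
  assumes kappa_pos: "\<kappa> > 0"
    and p_lim: "filterlim p at_top sequentially"
    and s_lim: "filterlim s at_top sequentially"
    and rate: "(\<lambda>n. (real (s n) + real n * ln (real (K n)) / ln (real (p n))) / real (p n))
                 \<longlonglongrightarrow> 0"
    and K_pos: "\<forall>n. K n \<ge> 1"
    and K_cond: "\<forall>n. real (K n) * ln (ln (real (p n))) \<le> ln (real (p n))"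
    and lam1_pos: "\<forall>n. lam1 n > 0"
    and lam_ratio: "(\<lambda>n. lam1 n / lam0 n) \<longlonglongrightarrow> 0"
  shows "\<exists>\<beta>>0. \<exists>c>0. \<forall>\<^sub>F n in sequentially.
           measure (ssl_prior (p n) (K n) \<kappa> (lam0 n) (lam1 n))
             {\<mu> \<in> space (ssl_prior (p n) (K n) \<kappa> (lam0 n) (lam1 n)).
                real (card (supp_soft (p n) (K n) ((1 + \<kappa>) * ln (real (p n)) / lam0 n) \<mu>))
                  \<ge> \<beta> * (real (s n) + real n * ln (real (K n)) / ln (real (p n)))}
           \<le> exp (- c * (real (s n) * ln (real (p n)) + real n * ln (real (K n))))"
proof -
  have "filterlim (\<lambda>n. real (p n)) at_top sequentially"
    by (rule filterlim_compose[OF filterlim_real_sequentially p_lim])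
  note p_large = eventually_loglog_conditions[OF kappa_pos this]
  have "filterlim (\<lambda>n. real (s n)) at_top sequentially"
    by (rule filterlim_compose[OF filterlim_real_sequentially s_lim])
  then have "\<forall>\<^sub>F n in sequentially. 4 * ln 2 / \<kappa> \<le> real (s n)"
    by (simp add: filterlim_at_top)
  then have s_large: "\<forall>\<^sub>F n in sequentially. ln 2 \<le> \<kappa> * real (s n) / 4"
    by eventually_elim (use kappa_pos in \<open>simp add: field_simps\<close>)
  have "\<forall>\<^sub>F n in sequentially.
           measure (ssl_prior (p n) (K n) \<kappa> (lam0 n) (lam1 n))
             {\<mu> \<in> space (ssl_prior (p n) (K n) \<kappa> (lam0 n) (lam1 n)).
                real (card (supp_soft (p n) (K n) ((1 + \<kappa>) * ln (real (p n)) / lam0 n) \<mu>))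
                  \<ge> 1 * (real (s n) + real n * ln (real (K n)) / ln (real (p n)))}
           \<le> exp (- (\<kappa> / 4) * (real (s n) * ln (real (p n)) + real n * ln (real (K n))))"
    using p_large s_large
    by eventually_elim (use ssl_prior_soft_support_tail_le[OF kappa_pos K_pos[rule_format] K_cond[rule_format]] in auto)
  moreover have "\<kappa> / 4 > 0" using kappa_pos by simp
  ultimately show ?thesis using zero_less_one by blast
qed

end
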